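(* Let $\mathbb{B}$ be a partial $\sigma^{brdg}$-structure. Then $\mathbb{B}$ is a partial substructure of some square-increasing brdg (one satisfying $x\leqslant x\circ x$) if and only if its $\{\wedge,\vee,0,1,\leqslant\}$-reduct is a partial bounded lattice and there exists a set $\mathcal F$ of prime filters of $\mathbb{B}$, each of which additionally satisfies (a) $a,b\in f$ and $(a,b)\in\mathrm{dom}(\circ^{\mathbb{B}})$ imply $a\circ^{\mathbb{B}}b\in f$, (b) $a\in f$, $a\backslash^{\mathbb{B}}b\in f$ with $(a,b)\in\mathrm{dom}(\backslash^{\mathbb{B}})$ imply $b\in f$, (c) $a/^{\mathbb{B}}b\in f$, $b\in f$ with $(a,b)\in\mathrm{dom}(/^{\mathbb{B}})$ imply $a\in f$, such that $\mathcal F$ satisfies (D), (M$_\circ$), (M$_\backslash$) and (M$_/$): (M$_\circ$) for all $h\in\mathcal F$ and $(a,b)\in\mathrm{dom}(\circ^{\mathbb{B}})$ with $a\circ^{\mathbb{B}}b\in h$ there are $f,g\in\mathcal F$ with $a\in f$, $b\in g$, $R^{\mathbb{B}}(f,g,h)$; (M$_\backslash$) for all $g\in\mathcal F$ and $(a,b)\in\mathrm{dom}(\backslash^{\mathbb{B}})$ with $a\backslash^{\mathbb{B}}b\notin g$ there are $f,h\in\mathcal F$ with $a\in f$, $b\notin h$, $R^{\mathbb{B}}(f,g,h)$; (M$_/$) for all $f\in\mathcal F$ and $(a,b)\in\mathrm{dom}(/^{\mathbb{B}})$ with $a/^{\mathbb{B}}b\notin f$ there are $g,h\in\mathcal F$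 with $b\in g$, $a\notin h$, $R^{\mathbb{B}}(f,g,h)$.
   Context: A brdg is an algebra $\langle A,\wedge,\vee,\circ,\backslash,/,0,1,\leqslant\rangle$ where $\langle A,\wedge,\vee,0,1\rangle$ is a bounded distributive lattice with natural order $\leqslant$ and $\circ,\backslash,/$ are binary operations with $x\circ y\leqslant z\iff y\leqslant x\backslash z\iff x\leqslant z/y$. The language $\sigma^{brdg}$ has binary operation symbols $\wedge,\vee,\circ,\backslash,/$, constants $0,1$ and relation symbol $\leqslant$. A partial $\sigma^{brdg}$-structure $\mathbb{B}$ consists of a nonempty set $B$, for each binary operation symbol $\delta$ a partial function $\delta^{\mathbb{B}}:\mathrm{dom}(\delta^{\mathbb{B}})\to B$ with $\mathrm{dom}(\delta^{\mathbb{B}})\subseteq B^2$, elements $0^{\mathbb{B}},1^{\mathbb{B}}\in B$ and a binary relation $\leqslant^{\mathbb{B}}$ on $B$. It is a partial substructure of $\mathbb{A}$ if $B\subseteq A$, each $\delta^{\mathbb{B}}$ agrees with $\delta^{\mathbb{A}}$ on its domain, constants coincide and $\leqslant^{\mathbb{B}}=\leqslant^{\mathbb{A}}\cap B^2$. The reduct is a partial bounded lattice if $\leqslant^{\mathbb{B}}$ is a partial order with least element $0^{\mathbb{B}}$ and greatest $1^{\mathbb{B}}$, and any defined $a\wedge^{\mathbb{B}}b$ (resp. $a\vee^{\mathbb{B}}b$) is the greatest lower (resp. least upper) bound of $\{a,b\}$ w.r.t. $\leqslant^{\mathbb{B}}$. A prime filter of $\mathbb{B}$ is $f\subseteq B$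 with $1^{\mathbb{B}}\in f$, $0^{\mathbb{B}}\notin f$, $f$ upward closed under $\leqslant^{\mathbb{B}}$, $a,b\in f$ and $a\wedge^{\mathbb{B}}b$ defined imply $a\wedge^{\mathbb{B}}b\in f$, and $a,b\notin f$ and $a\vee^{\mathbb{B}}b$ defined imply $a\vee^{\mathbb{B}}b\notin f$. Condition (D): for all $a,b\in B$ with $a\not\leqslant^{\mathbb{B}}b$ there is $f\in\mathcal F$ with $a\in f$, $b\notin f$. $R^{\mathbb{B}}(f,g,h)$ holds iff: for all $(a,b)\in\mathrm{dom}(\circ^{\mathbb{B}})$, $a\in f,b\in g$ imply $a\circ^{\mathbb{B}}b\in h$; for all $(a,b)\in\mathrm{dom}(\backslash^{\mathbb{B}})$, $a\in f, a\backslash^{\mathbb{B}}b\in g$ imply $b\in h$; for all $(a,b)\in\mathrm{dom}(/^{\mathbb{B}})$, $b/^{\mathbb{B}}a\in f$, $a\in g$ imply $b\in h$. *)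

theory Defs
  imports Main
begin

text \<open>Binary operations are partial
  functions, represented with option: (a,b) is in the domain of an operation iff
  both arguments are in the carrier and the value is not None.\<close>

record 'a pstruct =
  pcar  :: "'a set"
  pmeet :: "'a \<Rightarrow> 'a \<Rightarrow> 'a option"
  pjoin :: "'a \<Rightarrow> 'a \<Rightarrow> 'a option"
  pfus  :: "'a \<Rightarrow> 'a \<Rightarrow> 'a option"
  pldiv :: "'a \<Rightarrow> 'a \<Rightarrow> 'a option"
  prdiv :: "'a \<Rightarrow> 'a \<Rightarrow> 'a option"
  pbot  :: 'a
  ptop  :: 'a
  ple   :: "'a \<Rightarrow> 'a \<Rightarrow> bool"

definition pdom :: "('a \<Rightarrow> 'a \<Rightarrow> 'a option) \<Rightarrow> 'a set \<Rightarrow> ('a \<times> 'a) set" where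
  "pdom op B = {(a, b). a \<in> B \<and> b \<in> B \<and> op a b \<noteq> None}"

definition pval :: "('a \<Rightarrow> 'a \<Rightarrow> 'a option) \<Rightarrow> 'a \<Rightarrow> 'a \<Rightarrow> 'a" where
  "pval op a b = the (op a b)"

definition pops :: "'a pstruct \<Rightarrow> ('a \<Rightarrow> 'a \<Rightarrow> 'a option) list" where
  "pops S = [pmeet S, pjoin S, pfus S, pldiv S, prdiv S]"

definition partial_structure :: "'a pstruct \<Rightarrow> bool" where
  "partial_structure S \<longleftrightarrow> pcar S \<noteq> {}
     \<and> (\<forall>op \<in> set (pops S). \<forall>a \<in> pcar S. \<forall>b \<in> pcar S. \<forall>c. op a b = Some c \<longrightarrow> c \<in> pcar S)
     \<and> pbot S \<in> pcar S \<and> ptop S \<in> pcar S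
     \<and> (\<forall>a b. ple S a b \<longrightarrow> a \<in> pcar S \<and> b \<in> pcar S)"

definition is_brdg :: "'a pstruct \<Rightarrow> bool" where
  "is_brdg A \<longleftrightarrow> partial_structure A
     \<and> (\<forall>op \<in> set (pops A). \<forall>a \<in> pcar A. \<forall>b \<in> pcar A. op a b \<noteq> None)
     \<and> (let A' = pcar A; m = pval (pmeet A); j = pval (pjoin A); f = pval (pfus A);
            l = pval (pldiv A); r = pval (prdiv A); le = ple A; z = pbot A; u = ptop A in
        (\<forall>x\<in>A'. \<forall>y\<in>A'. m x y = m y x \<and> j x y = j y x)
      \<and> (\<forall>x\<in>A'. \<forall>y\<in>A'. \<forall>w\<in>A'. m x (m y w) = m (m x y) w \<and> j x (j y w) = j (j x y) w)
      \<and> (\<forall>x\<in>A'. \<forall>y\<in>A'. m x (j x y) = x \<and> j x (m x y) = x)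
      \<and> (\<forall>x\<in>A'. \<forall>y\<in>A'. \<forall>w\<in>A'. m x (j y w) = j (m x y) (m x w))
      \<and> (\<forall>x\<in>A'. j x z = x \<and> m x u = x)
      \<and> (\<forall>x\<in>A'. \<forall>y\<in>A'. le x y \<longleftrightarrow> m x y = x)
      \<and> (\<forall>x\<in>A'. \<forall>y\<in>A'. \<forall>w\<in>A'.
            (le (f x y) w \<longleftrightarrow> le y (l x w)) \<and> (le (f x y) w \<longleftrightarrow> le x (r w y))))"

definition square_increasing_brdg :: "'a pstruct \<Rightarrow> bool" where
  "square_increasing_brdg A \<longleftrightarrow> is_brdg A
     \<and> (\<forall>x \<in> pcar A. ple A x (pval (pfus A) x x))"

text \<open>Partial substructure up to isomorphism: e is an injective map from the carrier of B
  into the carrier of A such that the image of B (with operations restricted to the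
  images of the domains of B) is a partial substructure of A in the sense of the paper.\<close>
definition partial_substructure_via :: "'a pstruct \<Rightarrow> 'b pstruct \<Rightarrow> ('a \<Rightarrow> 'b) \<Rightarrow> bool" where
  "partial_substructure_via B A e \<longleftrightarrow>
     inj_on e (pcar B) \<and> e ` pcar B \<subseteq> pcar A
     \<and> e (pbot B) = pbot A \<and> e (ptop B) = ptop A
     \<and> (\<forall>a \<in> pcar B. \<forall>b \<in> pcar B. \<forall>c.
          (pmeet B a b = Some c \<longrightarrow> pmeet A (e a) (e b) = Some (e c))
        \<and> (pjoin B a b = Some c \<longrightarrow> pjoin A (e a) (e b) = Some (e c))
        \<and> (pfus B a b = Some c \<longrightarrow> pfus A (e a) (e b) = Some (e c))
        \<and> (pldiv B a b = Some c \<longrightarrow> pldiv A (e a) (e b) = Some (e c))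
        \<and> (prdiv B a b = Some c \<longrightarrow> prdiv A (e a) (e b) = Some (e c)))
     \<and> (\<forall>a \<in> pcar B. \<forall>b \<in> pcar B. ple B a b \<longleftrightarrow> ple A (e a) (e b))"

definition partial_bounded_lattice :: "'a pstruct \<Rightarrow> bool" where
  "partial_bounded_lattice S \<longleftrightarrow>
     (let B = pcar S; le = ple S in
       (\<forall>x\<in>B. le x x) \<and> (\<forall>x\<in>B. \<forall>y\<in>B. le x y \<and> le y x \<longrightarrow> x = y)
     \<and> (\<forall>x\<in>B. \<forall>y\<in>B. \<forall>w\<in>B. le x y \<and> le y w \<longrightarrow> le x w)
     \<and> (\<forall>x\<in>B. le (pbot S) x \<and> le x (ptop S))
     \<and> (\<forall>(a, b) \<in> pdom (pmeet S) B. let c = pval (pmeet S) a b in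
           le c a \<and> le c b \<and> (\<forall>x\<in>B. le x a \<and> le x b \<longrightarrow> le x c))
     \<and> (\<forall>(a, b) \<in> pdom (pjoin S) B. let c = pval (pjoin S) a b in
           le a c \<and> le b c \<and> (\<forall>x\<in>B. le a x \<and> le b x \<longrightarrow> le c x)))"

definition prime_filter :: "'a pstruct \<Rightarrow> 'a set \<Rightarrow> bool" where
  "prime_filter S f \<longleftrightarrow> f \<subseteq> pcar S \<and> ptop S \<in> f \<and> pbot S \<notin> f
     \<and> (\<forall>a \<in> f. \<forall>b \<in> pcar S. ple S a b \<longrightarrow> b \<in> f)
     \<and> (\<forall>(a, b) \<in> pdom (pmeet S) (pcar S). a \<in> f \<and> b \<in> f \<longrightarrow> pval (pmeet S) a b \<in> f)
     \<and> (\<forall>(a, b) \<in> pdom (pjoin S) (pcar S). a \<notin> f \<and> b \<notin> f \<longrightarrow> pval (pjoin S) a b \<notin> f)"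

definition closed_filter :: "'a pstruct \<Rightarrow> 'a set \<Rightarrow> bool" where
  "closed_filter S f \<longleftrightarrow>
       (\<forall>(a, b) \<in> pdom (pfus S) (pcar S). a \<in> f \<and> b \<in> f \<longrightarrow> pval (pfus S) a b \<in> f)
     \<and> (\<forall>(a, b) \<in> pdom (pldiv S) (pcar S). a \<in> f \<and> pval (pldiv S) a b \<in> f \<longrightarrow> b \<in> f)
     \<and> (\<forall>(a, b) \<in> pdom (prdiv S) (pcar S). pval (prdiv S) a b \<in> f \<and> b \<in> f \<longrightarrow> a \<in> f)"

definition condD :: "'a pstruct \<Rightarrow> 'a set set \<Rightarrow> bool" where
  "condD S F \<longleftrightarrow> (\<forall>a \<in> pcar S. \<forall>b \<in> pcar S. \<not> ple S a b \<longrightarrow> (\<exists>f \<in> F. a \<in> f \<and> b \<notin> f))"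

definition relR :: "'a pstruct \<Rightarrow> 'a set \<Rightarrow> 'a set \<Rightarrow> 'a set \<Rightarrow> bool" where
  "relR S f g h \<longleftrightarrow>
       (\<forall>(a, b) \<in> pdom (pfus S) (pcar S). a \<in> f \<and> b \<in> g \<longrightarrow> pval (pfus S) a b \<in> h)
     \<and> (\<forall>(a, b) \<in> pdom (pldiv S) (pcar S). a \<in> f \<and> pval (pldiv S) a b \<in> g \<longrightarrow> b \<in> h)
     \<and> (\<forall>(b, a) \<in> pdom (prdiv S) (pcar S). pval (prdiv S) b a \<in> f \<and> a \<in> g \<longrightarrow> b \<in> h)"

definition condM_fus :: "'a pstruct \<Rightarrow> 'a set set \<Rightarrow> bool" where
  "condM_fus S F \<longleftrightarrow> (\<forall>h \<in> F. \<forall>(a, b) \<in> pdom (pfus S) (pcar S).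
      pval (pfus S) a b \<in> h \<longrightarrow> (\<exists>f \<in> F. \<exists>g \<in> F. a \<in> f \<and> b \<in> g \<and> relR S f g h))"

definition condM_ldiv :: "'a pstruct \<Rightarrow> 'a set set \<Rightarrow> bool" where
  "condM_ldiv S F \<longleftrightarrow> (\<forall>g \<in> F. \<forall>(a, b) \<in> pdom (pldiv S) (pcar S).
      pval (pldiv S) a b \<notin> g \<longrightarrow> (\<exists>f \<in> F. \<exists>h \<in> F. a \<in> f \<and> b \<notin> h \<and> relR S f g h))"

definition condM_rdiv :: "'a pstruct \<Rightarrow> 'a set set \<Rightarrow> bool" where
  "condM_rdiv S F \<longleftrightarrow> (\<forall>f \<in> F. \<forall>(a, b) \<in> pdom (prdiv S) (pcar S).
      pval (prdiv S) a b \<notin> f \<longrightarrow> (\<exists>g \<in> F. \<exists>h \<in> F. b \<in> g \<and> a \<notin> h \<and> relR S f g h))"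

definition representable_sq :: "'a pstruct \<Rightarrow> bool" where
  "representable_sq S \<longleftrightarrow> partial_bounded_lattice S
     \<and> (\<exists>F. (\<forall>f \<in> F. prime_filter S f \<and> closed_filter S f)
            \<and> condD S F \<and> condM_fus S F \<and> condM_ldiv S F \<and> condM_rdiv S F)"

end

theory Submission
  imports Defs
begin

text \<open>If B sits inside a square-increasing brdg A, then x \<le> x \<circ> x makes every prime filter of A
  closed under fusion and the residuals, and the prime filter theorem combined with residuation
  produces prime filters witnessing (D) and the three (M) conditions; their preimages in B form
  the required family. Conversely, given such a family F, the complex algebra of the frame
  (F, R), i.e. the powerset of F with fusion and residuals induced by the ternary relation R, is
  a brdg, square-increasing because R f f f holds for every f \<in> F. The map sending a to the
  filters containing it embeds B: (D) makes it reflect the order and the (M) conditions make it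
  preserve fusion and the residuals.\<close>

section \<open>Prime filters of bounded distributive lattices\<close>

locale bounded_distrib_lattice_on =
  fixes C :: "'a set" and meet join :: "'a \<Rightarrow> 'a \<Rightarrow> 'a" and le :: "'a \<Rightarrow> 'a \<Rightarrow> bool"
    and bot top :: 'a
  assumes meet_closed: "x \<in> C \<Longrightarrow> y \<in> C \<Longrightarrow> meet x y \<in> C"
    and join_closed: "x \<in> C \<Longrightarrow> y \<in> C \<Longrightarrow> join x y \<in> C"
    and bot_closed: "bot \<in> C" and top_closed: "top \<in> C"
    and meet_comm: "x \<in> C \<Longrightarrow> y \<in> C \<Longrightarrow> meet x y = meet y x"
    and join_comm: "x \<in> C \<Longrightarrow> y \<in> C \<Longrightarrow> join x y = join y x"
    and meet_assoc: "x \<in> C \<Longrightarrow> y \<in> C \<Longrightarrow> w \<in> C \<Longrightarrow> meet x (meet y w) = meet (meet x y) w"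
    and join_assoc: "x \<in> C \<Longrightarrow> y \<in> C \<Longrightarrow> w \<in> C \<Longrightarrow> join x (join y w) = join (join x y) w"
    and meet_join_absorb: "x \<in> C \<Longrightarrow> y \<in> C \<Longrightarrow> meet x (join x y) = x"
    and join_meet_absorb: "x \<in> C \<Longrightarrow> y \<in> C \<Longrightarrow> join x (meet x y) = x"
    and meet_join_distrib: "x \<in> C \<Longrightarrow> y \<in> C \<Longrightarrow> w \<in> C \<Longrightarrow> meet x (join y w) = join (meet x y) (meet x w)"
    and join_bot: "x \<in> C \<Longrightarrow> join x bot = x"
    and meet_top: "x \<in> C \<Longrightarrow> meet x top = x"
    and le_iff_meet: "x \<in> C \<Longrightarrow> y \<in> C \<Longrightarrow> le x y \<longleftrightarrow> meet x y = x"
begin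

lemma meet_idem: "x \<in> C \<Longrightarrow> meet x x = x"
  by (metis meet_join_absorb join_meet_absorb meet_closed)

lemma le_refl: "x \<in> C \<Longrightarrow> le x x"
  by (simp add: le_iff_meet meet_idem)

lemma le_antisym: "x \<in> C \<Longrightarrow> y \<in> C \<Longrightarrow> le x y \<Longrightarrow> le y x \<Longrightarrow> x = y"
  by (metis le_iff_meet meet_comm)

lemma le_trans: "x \<in> C \<Longrightarrow> y \<in> C \<Longrightarrow> w \<in> C \<Longrightarrow> le x y \<Longrightarrow> le y w \<Longrightarrow> le x w"
  by (metis le_iff_meet meet_assoc)

lemma meet_le1: "x \<in> C \<Longrightarrow> y \<in> C \<Longrightarrow> le (meet x y) x"
  by (metis le_iff_meet meet_closed meet_assoc meet_idem meet_comm)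

lemma meet_le2: "x \<in> C \<Longrightarrow> y \<in> C \<Longrightarrow> le (meet x y) y"
  by (metis meet_le1 meet_comm)

lemma le_meetI: "x \<in> C \<Longrightarrow> y \<in> C \<Longrightarrow> w \<in> C \<Longrightarrow> le w x \<Longrightarrow> le w y \<Longrightarrow> le w (meet x y)"
  by (metis le_iff_meet meet_closed meet_assoc)

lemma le_iff_join: "x \<in> C \<Longrightarrow> y \<in> C \<Longrightarrow> le x y \<longleftrightarrow> join x y = y"
  by (metis le_iff_meet meet_join_absorb join_meet_absorb meet_comm join_comm)

lemma join_ge1: "x \<in> C \<Longrightarrow> y \<in> C \<Longrightarrow> le x (join x y)"
  by (metis le_iff_meet meet_join_absorb join_closed)

lemma join_ge2: "x \<in> C \<Longrightarrow> y \<in> C \<Longrightarrow> le y (join x y)"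
  by (metis join_ge1 join_comm)

lemma join_leI: "x \<in> C \<Longrightarrow> y \<in> C \<Longrightarrow> w \<in> C \<Longrightarrow> le x w \<Longrightarrow> le y w \<Longrightarrow> le (join x y) w"
  by (metis le_iff_join join_closed join_assoc)

lemma bot_le: "x \<in> C \<Longrightarrow> le bot x"
  by (metis le_iff_join join_bot join_comm bot_closed)

lemma le_top: "x \<in> C \<Longrightarrow> le x top"
  by (simp add: le_iff_meet meet_top top_closed)

lemma meet_mono:
  "x \<in> C \<Longrightarrow> x' \<in> C \<Longrightarrow> y \<in> C \<Longrightarrow> y' \<in> C \<Longrightarrow> le x x' \<Longrightarrow> le y y' \<Longrightarrow> le (meet x y) (meet x' y')"
  by (meson le_meetI le_trans meet_closed meet_le1 meet_le2)

lemma join_mono: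
  "x \<in> C \<Longrightarrow> x' \<in> C \<Longrightarrow> y \<in> C \<Longrightarrow> y' \<in> C \<Longrightarrow> le x x' \<Longrightarrow> le y y' \<Longrightarrow> le (join x y) (join x' y')"
  by (meson join_leI le_trans join_closed join_ge1 join_ge2)

definition lfilter :: "'a set \<Rightarrow> bool" where
  "lfilter S \<longleftrightarrow> S \<subseteq> C \<and> (\<forall>x\<in>S. \<forall>y\<in>C. le x y \<longrightarrow> y \<in> S) \<and> (\<forall>x\<in>S. \<forall>y\<in>S. meet x y \<in> S)"

definition lideal :: "'a set \<Rightarrow> bool" where
  "lideal I \<longleftrightarrow> I \<subseteq> C \<and> (\<forall>x\<in>I. \<forall>y\<in>C. le y x \<longrightarrow> y \<in> I) \<and> (\<forall>x\<in>I. \<forall>y\<in>I. join x y \<in> I)"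

definition lprime_filter :: "'a set \<Rightarrow> bool" where
  "lprime_filter P \<longleftrightarrow> lfilter P \<and> top \<in> P \<and> bot \<notin> P
     \<and> (\<forall>x\<in>C. \<forall>y\<in>C. join x y \<in> P \<longrightarrow> x \<in> P \<or> y \<in> P)"

lemma lfilter_Union_chain:
  assumes "\<And>X. X \<in> CC \<Longrightarrow> lfilter X" and "\<And>X Y. X \<in> CC \<Longrightarrow> Y \<in> CC \<Longrightarrow> X \<subseteq> Y \<or> Y \<subseteq> X"
  shows "lfilter (\<Union>CC)"
  unfolding lfilter_def
proof (intro conjI ballI impI)
  show "\<Union>CC \<subseteq> C" using assms(1) unfolding lfilter_def by blast
next
  fix x y assume "x \<in> \<Union>CC" "y \<in> C" "le x y"
  then show "y \<in> \<Union>CC" using assms(1) unfolding lfilter_def by blast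
next
  fix x y assume "x \<in> \<Union>CC" "y \<in> \<Union>CC"
  then obtain X Y where "X \<in> CC" "Y \<in> CC" "x \<in> X" "y \<in> Y" by blast
  then obtain Z where "Z \<in> CC" "x \<in> Z" "y \<in> Z" using assms(2) by blast
  then have "meet x y \<in> Z" using assms(1) unfolding lfilter_def by blast
  then show "meet x y \<in> \<Union>CC" using \<open>Z \<in> CC\<close> by blast
qed

lemma ex_maximal_lfilter:
  assumes "lfilter S" "S \<inter> I = {}"
  obtains M where "lfilter M" "S \<subseteq> M" "M \<inter> I = {}"
    "\<And>X. lfilter X \<Longrightarrow> M \<subseteq> X \<Longrightarrow> X \<inter> I = {} \<Longrightarrow> X = M"
proof -
  let ?AA = "{X. lfilter X \<and> S \<subseteq> X \<and> X \<inter> I = {}}"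
  have "\<exists>M\<in>?AA. \<forall>X\<in>?AA. M \<subseteq> X \<longrightarrow> X = M"
  proof (rule subset_Zorn_nonempty)
    fix CC assume ne: "CC \<noteq> {}" and ch: "subset.chain ?AA CC"
    then have "lfilter (\<Union>CC)"
      by (intro lfilter_Union_chain) (auto simp: subset_chain_def)
    with ne ch show "\<Union>CC \<in> ?AA" by (auto simp: subset_chain_def)
  qed (use assms in blast)
  then obtain M where "lfilter M" "S \<subseteq> M" "M \<inter> I = {}" "\<forall>X\<in>?AA. M \<subseteq> X \<longrightarrow> X = M"
    by blast
  then show thesis by (intro that) blast+
qed

lemma lfilter_upward_image:
  assumes G: "lfilter G" and closed: "\<And>g. g \<in> G \<Longrightarrow> \<phi> g \<in> C"
    and mono: "\<And>g g'. g \<in> G \<Longrightarrow> g' \<in> G \<Longrightarrow> le g g' \<Longrightarrow> le (\<phi> g) (\<phi> g')"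
  shows "lfilter {w\<in>C. \<exists>g\<in>G. le (\<phi> g) w}"
  unfolding lfilter_def
proof (intro conjI ballI impI)
  fix w w' assume "w \<in> {w\<in>C. \<exists>g\<in>G. le (\<phi> g) w}" "w' \<in> C" "le w w'"
  then obtain g where "g \<in> G" "le (\<phi> g) w" "w \<in> C" by blast
  then have "le (\<phi> g) w'" using le_trans[OF closed] \<open>w' \<in> C\<close> \<open>le w w'\<close> by blast
  then show "w' \<in> {w\<in>C. \<exists>g\<in>G. le (\<phi> g) w}" using \<open>g \<in> G\<close> \<open>w' \<in> C\<close> by blast
next
  have GC: "G \<subseteq> C" and G_meet: "\<And>g g'. g \<in> G \<Longrightarrow> g' \<in> G \<Longrightarrow> meet g g' \<in> G"
    using G unfolding lfilter_def by blast+
  fix w w' assume "w \<in> {w\<in>C. \<exists>g\<in>G. le (\<phi> g) w}" "w' \<in> {w\<in>C. \<exists>g\<in>G. le (\<phi> g) w}"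
  then obtain g g' where g: "g \<in> G" "g' \<in> G" "le (\<phi> g) w" "le (\<phi> g') w'" "w \<in> C" "w' \<in> C"
    by blast
  have gg: "meet g g' \<in> G" using G_meet g by blast
  have "le (\<phi> (meet g g')) (\<phi> g)" "le (\<phi> (meet g g')) (\<phi> g')"
    using mono[OF gg g(1)] mono[OF gg g(2)] g GC meet_le1 meet_le2 by blast+
  then have "le (\<phi> (meet g g')) w" "le (\<phi> (meet g g')) w'"
    using le_trans[OF closed[OF gg] closed[OF g(1)] g(5) _ g(3)]
      le_trans[OF closed[OF gg] closed[OF g(2)] g(6) _ g(4)] by simp_all
  then have "le (\<phi> (meet g g')) (meet w w')" using le_meetI[OF g(5,6) closed[OF gg]] by simp
  then show "meet w w' \<in> {w\<in>C. \<exists>g\<in>G. le (\<phi> g) w}" using gg g(5,6) meet_closed by blast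
qed simp

lemma lfilter_adjoin:
  assumes M: "lfilter M" and a: "a \<in> C"
  shows "lfilter {y\<in>C. \<exists>p\<in>M. le (meet p a) y}"
proof -
  have MC: "M \<subseteq> C" using M by (simp add: lfilter_def)
  show ?thesis
    by (rule lfilter_upward_image[OF M]) (use MC a in \<open>auto intro: meet_closed meet_mono le_refl\<close>)
qed

lemma maximal_lfilter_meet_below_ideal:
  assumes M: "lfilter M" "M \<noteq> {}"
    and maximal: "\<And>X. lfilter X \<Longrightarrow> M \<subseteq> X \<Longrightarrow> X \<inter> I = {} \<Longrightarrow> X = M"
    and a: "a \<in> C" "a \<notin> M"
  shows "\<exists>p\<in>M. \<exists>i\<in>I. le (meet p a) i"
proof (rule ccontr)
  assume no_bound: "\<not> ?thesis"
  let ?Ma = "{y\<in>C. \<exists>p\<in>M. le (meet p a) y}"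
  have MC: "M \<subseteq> C" using M unfolding lfilter_def by blast
  have "M \<subseteq> ?Ma" using MC a by (auto intro: meet_le1)
  moreover have "?Ma \<inter> I = {}" using no_bound by blast
  ultimately have "?Ma = M" using maximal lfilter_adjoin[OF M(1) a(1)] by blast
  moreover have "a \<in> ?Ma" using M(2) MC a by (auto intro: meet_le2)
  ultimately show False using a(2) by blast
qed

lemma maximal_lfilter_prime:
  assumes M: "lfilter M" "M \<noteq> {}" and I: "lideal I" "bot \<in> I" and MI: "M \<inter> I = {}"
    and maximal: "\<And>X. lfilter X \<Longrightarrow> M \<subseteq> X \<Longrightarrow> X \<inter> I = {} \<Longrightarrow> X = M"
  shows "lprime_filter M"
  unfolding lprime_filter_def
proof (intro conjI ballI impI)
  have MC: "M \<subseteq> C" and M_up: "\<And>x y. x \<in> M \<Longrightarrow> y \<in> C \<Longrightarrow> le x y \<Longrightarrow> y \<in> M"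
    and M_meet: "\<And>x y. x \<in> M \<Longrightarrow> y \<in> M \<Longrightarrow> meet x y \<in> M"
    using M(1) unfolding lfilter_def by blast+
  have IC: "I \<subseteq> C" and I_down: "\<And>x y. x \<in> I \<Longrightarrow> y \<in> C \<Longrightarrow> le y x \<Longrightarrow> y \<in> I"
    and I_join: "\<And>x y. x \<in> I \<Longrightarrow> y \<in> I \<Longrightarrow> join x y \<in> I"
    using I(1) unfolding lideal_def by blast+
  show "lfilter M" by fact
  show "top \<in> M" using M(2) MC M_up le_top top_closed by blast
  show "bot \<notin> M" using MI I(2) by blast
  fix a b assume ab: "a \<in> C" "b \<in> C" "join a b \<in> M"
  show "a \<in> M \<or> b \<in> M"
  proof (rule ccontr)
    assume "\<not> (a \<in> M \<or> b \<in> M)"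
    then have "\<exists>p\<in>M. \<exists>i\<in>I. le (meet p a) i" "\<exists>q\<in>M. \<exists>i'\<in>I. le (meet q b) i'"
      using maximal_lfilter_meet_below_ideal[where I=I, OF M maximal] ab(1,2) by blast+
    then obtain p i q i' where pi: "p \<in> M" "i \<in> I" "le (meet p a) i" "q \<in> M" "i' \<in> I" "le (meet q b) i'"
      by blast
    have C': "p \<in> C" "q \<in> C" "i \<in> C" "i' \<in> C" using pi MC IC by auto
    define r where "r = meet p q"
    have r: "r \<in> M" "r \<in> C" using M_meet pi C' meet_closed unfolding r_def by auto
    have cl: "meet r a \<in> C" "meet r b \<in> C" "meet p a \<in> C" "meet q b \<in> C"
      using r C' ab by (simp_all add: meet_closed)
    have "le (meet r a) (meet p a)" "le (meet r b) (meet q b)"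
      using C' ab unfolding r_def by (simp_all add: meet_mono meet_le1 meet_le2 le_refl meet_closed)
    then have "le (meet r a) i" "le (meet r b) i'"
      using le_trans[OF cl(1,3) C'(3) _ pi(3)] le_trans[OF cl(2,4) C'(4) _ pi(6)] by simp_all
    then have "le (join (meet r a) (meet r b)) (join i i')"
      using join_mono[OF cl(1) C'(3) cl(2) C'(4)] by simp
    moreover have "join (meet r a) (meet r b) = meet r (join a b)"
      using meet_join_distrib r ab by simp
    ultimately have "meet r (join a b) \<in> I"
      using I_down[OF I_join[OF pi(2,5)]] r ab by (simp add: meet_closed join_closed)
    moreover have "meet r (join a b) \<in> M" using M_meet r ab by blast
    ultimately show False using MI by blast
  qed
qed

theorem lprime_filter_separation:
  assumes S: "lfilter S" "S \<noteq> {}" and I: "lideal I" "bot \<in> I" and SI: "S \<inter> I = {}"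
  obtains P where "lprime_filter P" "S \<subseteq> P" "P \<inter> I = {}"
proof -
  obtain M where M: "lfilter M" "S \<subseteq> M" "M \<inter> I = {}"
    and maximal: "\<And>X. lfilter X \<Longrightarrow> M \<subseteq> X \<Longrightarrow> X \<inter> I = {} \<Longrightarrow> X = M"
    using ex_maximal_lfilter[OF S(1) SI] by blast
  have "lprime_filter M"
    using maximal_lfilter_prime[OF M(1) _ I M(3) maximal] M(2) S(2) by blast
  then show thesis using that M by blast
qed

lemma lfilter_up: "x \<in> C \<Longrightarrow> lfilter {y\<in>C. le x y}"
  unfolding lfilter_def by (auto intro: le_trans le_meetI meet_closed)

lemma lideal_down: "x \<in> C \<Longrightarrow> lideal {y\<in>C. le y x}"
  unfolding lideal_def by (auto intro: le_trans join_leI join_closed)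

corollary lprime_filter_containing:
  assumes x: "x \<in> C" and I: "lideal I" "bot \<in> I" "x \<notin> I"
  obtains P where "lprime_filter P" "x \<in> P" "P \<inter> I = {}"
proof -
  have "\<And>y. y \<in> I \<Longrightarrow> le x y \<Longrightarrow> x \<in> I"
    using I(1) x unfolding lideal_def by blast
  then have "{y\<in>C. le x y} \<inter> I = {}" using I(3) by blast
  moreover have "{y\<in>C. le x y} \<noteq> {}" using x le_refl by blast
  ultimately obtain P where "lprime_filter P" "{y\<in>C. le x y} \<subseteq> P" "P \<inter> I = {}"
    using lprime_filter_separation[OF lfilter_up[OF x] _ I(1,2)] by blast
  moreover have "x \<in> {y\<in>C. le x y}" using x le_refl by blast
  ultimately show thesis using that by blast
qed

corollary lprime_filter_excluding:
  assumes S: "lfilter S" "S \<noteq> {}" and y: "y \<in> C" and no_below: "\<And>s. s \<in> S \<Longrightarrow> \<not> le s y"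
  obtains P where "lprime_filter P" "S \<subseteq> P" "y \<notin> P"
proof -
  have "bot \<in> {w\<in>C. le w y}" using y bot_le bot_closed by blast
  moreover have "S \<inter> {w\<in>C. le w y} = {}" using no_below by blast
  ultimately obtain P where "lprime_filter P" "S \<subseteq> P" "P \<inter> {w\<in>C. le w y} = {}"
    by (rule lprime_filter_separation[OF S lideal_down[OF y]])
  moreover have "y \<in> {w\<in>C. le w y}" using y le_refl by blast
  ultimately show thesis using that by blast
qed

lemma lprime_filter_lfilter: "lprime_filter P \<Longrightarrow> lfilter P"
  by (simp add: lprime_filter_def)

lemma lprime_filter_subset: "lprime_filter P \<Longrightarrow> P \<subseteq> C"
  by (simp add: lprime_filter_def lfilter_def)

lemma lprime_filter_top: "lprime_filter P \<Longrightarrow> top \<in> P"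
  by (simp add: lprime_filter_def)

lemma lprime_filter_bot: "lprime_filter P \<Longrightarrow> bot \<notin> P"
  by (simp add: lprime_filter_def)

lemma lprime_filter_up: "lprime_filter P \<Longrightarrow> x \<in> P \<Longrightarrow> y \<in> C \<Longrightarrow> le x y \<Longrightarrow> y \<in> P"
  unfolding lprime_filter_def lfilter_def by blast

lemma lprime_filter_down: "lprime_filter P \<Longrightarrow> y \<notin> P \<Longrightarrow> x \<in> C \<Longrightarrow> y \<in> C \<Longrightarrow> le x y \<Longrightarrow> x \<notin> P"
  using lprime_filter_up by blast

lemma lprime_filter_meet: "lprime_filter P \<Longrightarrow> x \<in> P \<Longrightarrow> y \<in> P \<Longrightarrow> meet x y \<in> P"
  unfolding lprime_filter_def lfilter_def by blast

lemma lprime_filter_join: "lprime_filter P \<Longrightarrow> x \<in> C \<Longrightarrow> y \<in> C \<Longrightarrow> x \<notin> P \<Longrightarrow> y \<notin> P \<Longrightarrow> join x y \<notin> P"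
  unfolding lprime_filter_def by blast

end

section \<open>Prime filters of residuated lattices\<close>

locale residuated_lattice_on = bounded_distrib_lattice_on +
  fixes fus ldiv rdiv :: "'a \<Rightarrow> 'a \<Rightarrow> 'a"
  assumes fus_closed: "x \<in> C \<Longrightarrow> y \<in> C \<Longrightarrow> fus x y \<in> C"
    and ldiv_closed: "x \<in> C \<Longrightarrow> y \<in> C \<Longrightarrow> ldiv x y \<in> C"
    and rdiv_closed: "x \<in> C \<Longrightarrow> y \<in> C \<Longrightarrow> rdiv x y \<in> C"
    and fus_le_iff_le_ldiv: "x \<in> C \<Longrightarrow> y \<in> C \<Longrightarrow> w \<in> C \<Longrightarrow> le (fus x y) w \<longleftrightarrow> le y (ldiv x w)"
    and fus_le_iff_le_rdiv: "x \<in> C \<Longrightarrow> y \<in> C \<Longrightarrow> w \<in> C \<Longrightarrow> le (fus x y) w \<longleftrightarrow> le x (rdiv w y)"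
begin

text \<open>Swapping the arguments of fusion exchanges the two residuals; this symmetry yields the
  right-handed splitting lemmas from the left-handed ones.\<close>
lemma residuated_lattice_on_dual:
  "residuated_lattice_on C meet join le bot top (\<lambda>x y. fus y x) (\<lambda>x w. rdiv w x) (\<lambda>w y. ldiv y w)"
  by unfold_locales
    (simp_all add: fus_closed ldiv_closed rdiv_closed fus_le_iff_le_ldiv fus_le_iff_le_rdiv,
     metis fus_le_iff_le_ldiv fus_le_iff_le_rdiv)

lemma fus_mono_left: "x \<in> C \<Longrightarrow> x' \<in> C \<Longrightarrow> y \<in> C \<Longrightarrow> le x x' \<Longrightarrow> le (fus x y) (fus x' y)"
  by (meson fus_closed rdiv_closed le_refl le_trans fus_le_iff_le_rdiv)

lemma fus_mono_right: "x \<in> C \<Longrightarrow> y \<in> C \<Longrightarrow> y' \<in> C \<Longrightarrow> le y y' \<Longrightarrow> le (fus x y) (fus x y')"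
  by (meson fus_closed ldiv_closed le_refl le_trans fus_le_iff_le_ldiv)

lemma fus_join_left_le:
  "x \<in> C \<Longrightarrow> x' \<in> C \<Longrightarrow> y \<in> C \<Longrightarrow> le (fus (join x x') y) (join (fus x y) (fus x' y))"
  by (smt (verit) fus_closed join_closed rdiv_closed join_ge1 join_ge2 join_leI fus_le_iff_le_rdiv)

lemma fus_bot_left_le: "y \<in> C \<Longrightarrow> le (fus bot y) bot"
  by (meson rdiv_closed bot_closed bot_le fus_le_iff_le_rdiv)

lemma fus_ldiv_le: "x \<in> C \<Longrightarrow> y \<in> C \<Longrightarrow> le (fus x (ldiv x y)) y"
  by (meson ldiv_closed le_refl fus_le_iff_le_ldiv)

lemma fus_rdiv_le: "x \<in> C \<Longrightarrow> y \<in> C \<Longrightarrow> le (fus (rdiv y x) x) y"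
  by (meson rdiv_closed le_refl fus_le_iff_le_rdiv)

text \<open>Primeness of H is what makes this set closed under joins.\<close>
lemma lideal_fus_escape:
  assumes H: "lprime_filter H" and Q: "lfilter Q"
  shows "lideal {v\<in>C. \<exists>q\<in>Q. fus v q \<notin> H}"
proof -
  have QC: "Q \<subseteq> C" using Q by (simp add: lfilter_def)
  show ?thesis
    unfolding lideal_def
  proof (intro conjI ballI impI)
    show "{v\<in>C. \<exists>q\<in>Q. fus v q \<notin> H} \<subseteq> C" by blast
  next
    fix v y assume "v \<in> {v\<in>C. \<exists>q\<in>Q. fus v q \<notin> H}" and y: "y \<in> C" "le y v"
    then obtain q where q: "q \<in> Q" "fus v q \<notin> H" "v \<in> C" by blast
    have "fus y q \<notin> H"
      using lprime_filter_down[OF H q(2)] fus_mono_left[OF y(1) q(3) _ y(2)] q QC y(1) fus_closed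
      by blast
    then show "y \<in> {v\<in>C. \<exists>q\<in>Q. fus v q \<notin> H}" using q y(1) by blast
  next
    fix v v' assume "v \<in> {v\<in>C. \<exists>q\<in>Q. fus v q \<notin> H}" "v' \<in> {v\<in>C. \<exists>q\<in>Q. fus v q \<notin> H}"
    then obtain q q' where q: "q \<in> Q" "fus v q \<notin> H" "v \<in> C" "q' \<in> Q" "fus v' q' \<notin> H" "v' \<in> C"
      by blast
    define r where "r = meet q q'"
    have qC: "q \<in> C" "q' \<in> C" using q QC by auto
    have r: "r \<in> Q" "r \<in> C" using Q q qC meet_closed unfolding lfilter_def r_def by auto
    have "fus v r \<notin> H"
      using lprime_filter_down[OF H q(2) fus_closed[OF q(3) r(2)] fus_closed[OF q(3) qC(1)]
          fus_mono_right[OF q(3) r(2) qC(1)]] meet_le1[OF qC] unfolding r_def by blast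
    moreover have "fus v' r \<notin> H"
      using lprime_filter_down[OF H q(5) fus_closed[OF q(6) r(2)] fus_closed[OF q(6) qC(2)]
          fus_mono_right[OF q(6) r(2) qC(2)]] meet_le2[OF qC] unfolding r_def by blast
    ultimately have "join (fus v r) (fus v' r) \<notin> H"
      using lprime_filter_join[OF H] fus_closed q r by blast
    then have "fus (join v v') r \<notin> H"
      using lprime_filter_down[OF H _ fus_closed[OF join_closed[OF q(3,6)] r(2)]]
        fus_join_left_le[OF q(3,6) r(2)] join_closed fus_closed q r by blast
    then show "join v v' \<in> {v\<in>C. \<exists>q\<in>Q. fus v q \<notin> H}" using r(1) join_closed q by blast
  qed
qed

lemma lprime_filter_fus_left:
  assumes H: "lprime_filter H" and Q: "lfilter Q" "Q \<noteq> {}" and x: "x \<in> C"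
    and xQ: "\<forall>q\<in>Q. fus x q \<in> H"
  obtains P where "lprime_filter P" "x \<in> P" "\<forall>p\<in>P. \<forall>q\<in>Q. fus p q \<in> H"
proof -
  let ?I = "{v\<in>C. \<exists>q\<in>Q. fus v q \<notin> H}"
  obtain q where q: "q \<in> Q" "q \<in> C" using Q unfolding lfilter_def by blast
  have "fus bot q \<notin> H"
    using lprime_filter_down[OF H lprime_filter_bot[OF H] fus_closed[OF bot_closed q(2)] bot_closed
        fus_bot_left_le[OF q(2)]] .
  then have "bot \<in> ?I" using q(1) bot_closed by blast
  moreover have "x \<notin> ?I" using xQ by blast
  ultimately obtain P where "lprime_filter P" "x \<in> P" "P \<inter> ?I = {}"
    using lprime_filter_containing[OF x lideal_fus_escape[OF H Q(1)]] by blast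
  moreover from this have "\<forall>p\<in>P. \<forall>q\<in>Q. fus p q \<in> H" using lprime_filter_subset by blast
  ultimately show thesis using that by blast
qed

lemma lprime_filter_fus_right:
  assumes H: "lprime_filter H" and P: "lfilter P" "P \<noteq> {}" and y: "y \<in> C"
    and Py: "\<forall>p\<in>P. fus p y \<in> H"
  obtains Q where "lprime_filter Q" "y \<in> Q" "\<forall>p\<in>P. \<forall>q\<in>Q. fus p q \<in> H"
proof -
  interpret dual: residuated_lattice_on C meet join le bot top "\<lambda>x y. fus y x" "\<lambda>x w. rdiv w x" "\<lambda>w y. ldiv y w"
    by (rule residuated_lattice_on_dual)
  show thesis
  proof (rule dual.lprime_filter_fus_left[OF H P y])
    show "\<forall>q\<in>P. fus q y \<in> H" using Py by simp
  next
    fix Q assume "lprime_filter Q" "y \<in> Q" "\<forall>p\<in>Q. \<forall>q\<in>P. fus q p \<in> H"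
    then show thesis using that by blast
  qed
qed

lemma lprime_filter_fus_split:
  assumes H: "lprime_filter H" and x: "x \<in> C" and y: "y \<in> C" and xy: "fus x y \<in> H"
  obtains P Q where "lprime_filter P" "lprime_filter Q" "x \<in> P" "y \<in> Q" "\<forall>p\<in>P. \<forall>q\<in>Q. fus p q \<in> H"
proof -
  have "\<forall>q\<in>{w\<in>C. le y w}. fus x q \<in> H"
    using lprime_filter_up[OF H xy] fus_closed fus_mono_right x y by blast
  moreover have "{w\<in>C. le y w} \<noteq> {}" using y le_refl by blast
  ultimately obtain P where P: "lprime_filter P" "x \<in> P" "\<forall>p\<in>P. \<forall>q\<in>{w\<in>C. le y w}. fus p q \<in> H"
    using lprime_filter_fus_left[OF H lfilter_up[OF y] _ x] by blast
  then have "\<forall>p\<in>P. fus p y \<in> H" using y le_refl by blast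
  moreover have "P \<noteq> {}" using P(2) by blast
  ultimately obtain Q where "lprime_filter Q" "y \<in> Q" "\<forall>p\<in>P. \<forall>q\<in>Q. fus p q \<in> H"
    using lprime_filter_fus_right[OF H lprime_filter_lfilter[OF P(1)] _ y] by blast
  then show thesis using that P by blast
qed

lemma lprime_filter_ldiv_split:
  assumes G: "lprime_filter G" and x: "x \<in> C" and y: "y \<in> C" and xy: "ldiv x y \<notin> G"
  obtains P Q where "lprime_filter P" "lprime_filter Q" "x \<in> P" "y \<notin> Q" "\<forall>p\<in>P. \<forall>g\<in>G. fus p g \<in> Q"
proof -
  have GC: "G \<subseteq> C" using lprime_filter_subset[OF G] .
  let ?S = "{w\<in>C. \<exists>g\<in>G. le (fus x g) w}"
  have "lfilter ?S"
    by (rule lfilter_upward_image[OF lprime_filter_lfilter[OF G]])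
      (use GC x in \<open>auto intro: fus_closed fus_mono_right\<close>)
  moreover have "?S \<noteq> {}"
    using lprime_filter_top[OF G] top_closed fus_closed[OF x top_closed] le_refl by blast
  moreover have "\<not> le s y" if "s \<in> ?S" for s
  proof
    assume "le s y"
    from that obtain g where g: "g \<in> G" "le (fus x g) s" "s \<in> C" by blast
    then have "le (fus x g) y" using le_trans[OF fus_closed[OF x] g(3) y] \<open>le s y\<close> GC by blast
    then have "le g (ldiv x y)" using fus_le_iff_le_ldiv x y g GC by blast
    then show False using xy lprime_filter_up[OF G g(1) ldiv_closed[OF x y]] by blast
  qed
  ultimately obtain Q where Q: "lprime_filter Q" "?S \<subseteq> Q" "y \<notin> Q"
    by (rule lprime_filter_excluding[OF _ _ y])
  have "\<forall>g\<in>G. fus x g \<in> Q" using Q(2) GC fus_closed x le_refl by blast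
  then obtain P where "lprime_filter P" "x \<in> P" "\<forall>p\<in>P. \<forall>g\<in>G. fus p g \<in> Q"
    using lprime_filter_fus_left[OF Q(1) lprime_filter_lfilter[OF G] _ x] lprime_filter_top[OF G] by blast
  then show thesis using that Q by blast
qed

lemma lprime_filter_rdiv_split:
  assumes P: "lprime_filter P" and x: "x \<in> C" and y: "y \<in> C" and xy: "rdiv x y \<notin> P"
  obtains G H where "lprime_filter G" "lprime_filter H" "y \<in> G" "x \<notin> H" "\<forall>p\<in>P. \<forall>g\<in>G. fus p g \<in> H"
proof -
  interpret dual: residuated_lattice_on C meet join le bot top "\<lambda>x y. fus y x" "\<lambda>x w. rdiv w x" "\<lambda>w y. ldiv y w"
    by (rule residuated_lattice_on_dual)
  show thesis
  proof (rule dual.lprime_filter_ldiv_split[OF P y x])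
    show "rdiv x y \<notin> P" by (fact xy)
  next
    fix G H assume "lprime_filter G" "lprime_filter H" "y \<in> G" "x \<notin> H" "\<forall>g\<in>G. \<forall>p\<in>P. fus p g \<in> H"
    then show thesis using that by blast
  qed
qed

end

locale square_increasing_lattice_on = residuated_lattice_on +
  assumes le_fus_self: "x \<in> C \<Longrightarrow> le x (fus x x)"
begin

lemma lprime_filter_fus: "lprime_filter P \<Longrightarrow> a \<in> P \<Longrightarrow> b \<in> P \<Longrightarrow> fus a b \<in> P"
proof -
  assume P: "lprime_filter P" and ab: "a \<in> P" "b \<in> P"
  have C': "a \<in> C" "b \<in> C" using ab lprime_filter_subset[OF P] by auto
  define c where "c = meet a b"
  have c: "c \<in> P" "c \<in> C" using lprime_filter_meet[OF P ab] meet_closed[OF C'] unfolding c_def by auto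
  have "le (fus c c) (fus a c)" "le (fus a c) (fus a b)"
    using fus_mono_left[OF c(2) C'(1) c(2)] fus_mono_right[OF C'(1) c(2) C'(2)] C'
    unfolding c_def by (simp_all add: meet_le1 meet_le2)
  then have "le c (fus a b)"
    using le_fus_self[OF c(2)] le_trans fus_closed c(2) C' by meson
  then show "fus a b \<in> P" using lprime_filter_up[OF P c(1) fus_closed[OF C']] by blast
qed

lemma lprime_filter_ldiv_mp: "lprime_filter P \<Longrightarrow> a \<in> P \<Longrightarrow> b \<in> C \<Longrightarrow> ldiv a b \<in> P \<Longrightarrow> b \<in> P"
  by (meson lprime_filter_fus lprime_filter_up lprime_filter_subset fus_ldiv_le subsetD)

lemma lprime_filter_rdiv_mp: "lprime_filter P \<Longrightarrow> a \<in> C \<Longrightarrow> b \<in> P \<Longrightarrow> rdiv a b \<in> P \<Longrightarrow> a \<in> P"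
  by (meson lprime_filter_fus lprime_filter_up lprime_filter_subset fus_rdiv_le subsetD)

end

section \<open>Partial substructures of square-increasing brdgs are representable\<close>

lemma ball_prodI: "(\<And>a b. (a, b) \<in> X \<Longrightarrow> P a b) \<Longrightarrow> \<forall>(a, b)\<in>X. P a b"
  by blast

lemma in_pops: "pmeet S \<in> set (pops S)" "pjoin S \<in> set (pops S)" "pfus S \<in> set (pops S)"
  "pldiv S \<in> set (pops S)" "prdiv S \<in> set (pops S)"
  by (simp_all add: pops_def)

lemma partial_structure_pval_closed:
  assumes "partial_structure S" "op \<in> set (pops S)" "(a, b) \<in> pdom op (pcar S)"
  shows "pval op a b \<in> pcar S"
  using assms unfolding partial_structure_def pdom_def pval_def by fastforce

lemma pval_hom:
  assumes "(a, b) \<in> pdom opB X" "\<And>c. opB a b = Some c \<Longrightarrow> opA (e a) (e b) = Some (e c)"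
  shows "pval opA (e a) (e b) = e (pval opB a b)"
  using assms unfolding pdom_def pval_def by auto

lemma square_increasing_lattice_on_brdg:
  assumes "square_increasing_brdg A"
  shows "square_increasing_lattice_on (pcar A) (pval (pmeet A)) (pval (pjoin A)) (ple A) (pbot A) (ptop A)
           (pval (pfus A)) (pval (pldiv A)) (pval (prdiv A))"
proof -
  have A: "is_brdg A" "\<forall>x\<in>pcar A. ple A x (pval (pfus A) x x)"
    using assms by (simp_all add: square_increasing_brdg_def)
  have ps: "partial_structure A"
    and total: "\<forall>op \<in> set (pops A). \<forall>a \<in> pcar A. \<forall>b \<in> pcar A. op a b \<noteq> None"
    using A(1) by (simp_all add: is_brdg_def)
  have closed: "pval op a b \<in> pcar A" if "op \<in> set (pops A)" "a \<in> pcar A" "b \<in> pcar A" for op a b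
    using partial_structure_pval_closed[OF ps that(1)] total that by (simp add: pdom_def)
  have bounds: "pbot A \<in> pcar A" "ptop A \<in> pcar A"
    using ps by (simp_all add: partial_structure_def)
  note axioms = A(1)[unfolded is_brdg_def Let_def, THEN conjunct2, THEN conjunct2]
  show ?thesis
    by unfold_locales ((simp add: closed in_pops bounds; fail) | (use axioms A(2) in blast))+
qed

locale brdg_embedding = square_increasing_lattice_on +
  fixes B :: "'c pstruct" and e :: "'c \<Rightarrow> 'a"
  assumes partial: "partial_structure B"
    and emb_closed: "a \<in> pcar B \<Longrightarrow> e a \<in> C"
    and emb_inj: "inj_on e (pcar B)"
    and emb_bot: "e (pbot B) = bot" and emb_top: "e (ptop B) = top"
    and emb_meet: "(a, b) \<in> pdom (pmeet B) (pcar B) \<Longrightarrow> meet (e a) (e b) = e (pval (pmeet B) a b)"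
    and emb_join: "(a, b) \<in> pdom (pjoin B) (pcar B) \<Longrightarrow> join (e a) (e b) = e (pval (pjoin B) a b)"
    and emb_fus: "(a, b) \<in> pdom (pfus B) (pcar B) \<Longrightarrow> fus (e a) (e b) = e (pval (pfus B) a b)"
    and emb_ldiv: "(a, b) \<in> pdom (pldiv B) (pcar B) \<Longrightarrow> ldiv (e a) (e b) = e (pval (pldiv B) a b)"
    and emb_rdiv: "(a, b) \<in> pdom (prdiv B) (pcar B) \<Longrightarrow> rdiv (e a) (e b) = e (pval (prdiv B) a b)"
    and emb_le: "a \<in> pcar B \<Longrightarrow> b \<in> pcar B \<Longrightarrow> ple B a b \<longleftrightarrow> le (e a) (e b)"
begin

lemma pval_closed: "op \<in> set (pops B) \<Longrightarrow> (a, b) \<in> pdom op (pcar B) \<Longrightarrow> pval op a b \<in> pcar B"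
  by (rule partial_structure_pval_closed[OF partial])

lemma partial_bounded_lattice_embedded: "partial_bounded_lattice B"
  unfolding partial_bounded_lattice_def Let_def
proof (intro conjI ballI impI; (elim conjE)?)
  have bounds: "pbot B \<in> pcar B" "ptop B \<in> pcar B" using partial by (simp_all add: partial_structure_def)
  fix x assume x: "x \<in> pcar B"
  show "ple B x x" using emb_le[OF x x] le_refl[OF emb_closed[OF x]] by simp
  show "ple B (pbot B) x" using emb_le[OF bounds(1) x] emb_bot bot_le[OF emb_closed[OF x]] by simp
  show "ple B x (ptop B)" using emb_le[OF x bounds(2)] emb_top le_top[OF emb_closed[OF x]] by simp
next
  fix x y assume xy: "x \<in> pcar B" "y \<in> pcar B" "ple B x y" "ple B y x"
  then have "e x = e y" using emb_le le_antisym emb_closed by metis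
  then show "x = y" using emb_inj xy(1,2) by (simp add: inj_on_def)
next
  fix x y w assume "x \<in> pcar B" "y \<in> pcar B" "w \<in> pcar B" "ple B x y" "ple B y w"
  then show "ple B x w" using emb_le le_trans emb_closed by metis
next
  fix p assume p: "p \<in> pdom (pmeet B) (pcar B)"
  obtain a b where ab: "p = (a, b)" by (cases p)
  then have abB: "a \<in> pcar B" "b \<in> pcar B" using p by (simp_all add: pdom_def)
  let ?c = "pval (pmeet B) a b"
  have c: "?c \<in> pcar B" "e ?c = meet (e a) (e b)"
    using pval_closed[OF in_pops(1)] emb_meet p unfolding ab(1) by simp_all
  show "case p of (a, b) \<Rightarrow> ple B (pval (pmeet B) a b) a \<and> ple B (pval (pmeet B) a b) b \<and>
      (\<forall>x\<in>pcar B. ple B x a \<and> ple B x b \<longrightarrow> ple B x (pval (pmeet B) a b))"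
    using ab abB c emb_le emb_closed by (auto simp: meet_le1 meet_le2 le_meetI)
next
  fix p assume p: "p \<in> pdom (pjoin B) (pcar B)"
  obtain a b where ab: "p = (a, b)" by (cases p)
  then have abB: "a \<in> pcar B" "b \<in> pcar B" using p by (simp_all add: pdom_def)
  let ?c = "pval (pjoin B) a b"
  have c: "?c \<in> pcar B" "e ?c = join (e a) (e b)"
    using pval_closed[OF in_pops(2)] emb_join p unfolding ab(1) by simp_all
  show "case p of (a, b) \<Rightarrow> ple B a (pval (pjoin B) a b) \<and> ple B b (pval (pjoin B) a b) \<and>
      (\<forall>x\<in>pcar B. ple B a x \<and> ple B b x \<longrightarrow> ple B (pval (pjoin B) a b) x)"
    using ab abB c emb_le emb_closed by (auto simp: join_ge1 join_ge2 join_leI)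
qed

definition pullback :: "'a set \<Rightarrow> 'c set" where
  "pullback P = pcar B \<inter> e -` P"

lemma prime_filter_pullback:
  assumes P: "lprime_filter P"
  shows "prime_filter B (pullback P)"
  unfolding prime_filter_def pullback_def
proof (intro conjI ball_prodI ballI impI)
  have bounds: "pbot B \<in> pcar B" "ptop B \<in> pcar B" using partial by (simp_all add: partial_structure_def)
  show "pcar B \<inter> e -` P \<subseteq> pcar B" by blast
  show "ptop B \<in> pcar B \<inter> e -` P" using bounds emb_top lprime_filter_top[OF P] by simp
  show "pbot B \<notin> pcar B \<inter> e -` P" using emb_bot lprime_filter_bot[OF P] by simp
next
  fix a b assume "a \<in> pcar B \<inter> e -` P" "b \<in> pcar B" "ple B a b"
  then show "b \<in> pcar B \<inter> e -` P" using emb_le emb_closed lprime_filter_up[OF P] by auto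
next
  fix a b assume d: "(a, b) \<in> pdom (pmeet B) (pcar B)" and "a \<in> pcar B \<inter> e -` P \<and> b \<in> pcar B \<inter> e -` P"
  then show "pval (pmeet B) a b \<in> pcar B \<inter> e -` P"
    using pval_closed[OF in_pops(1) d] emb_meet[OF d, symmetric] lprime_filter_meet[OF P] by auto
next
  fix a b assume d: "(a, b) \<in> pdom (pjoin B) (pcar B)" and "a \<notin> pcar B \<inter> e -` P \<and> b \<notin> pcar B \<inter> e -` P"
  moreover have "a \<in> pcar B" "b \<in> pcar B" using d by (simp_all add: pdom_def)
  ultimately show "pval (pjoin B) a b \<notin> pcar B \<inter> e -` P"
    using emb_join[OF d, symmetric] lprime_filter_join[OF P] emb_closed by auto
qed

lemma closed_filter_pullback:
  assumes P: "lprime_filter P"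
  shows "closed_filter B (pullback P)"
  unfolding closed_filter_def pullback_def
proof (intro conjI ball_prodI impI)
  fix a b assume d: "(a, b) \<in> pdom (pfus B) (pcar B)" and "a \<in> pcar B \<inter> e -` P \<and> b \<in> pcar B \<inter> e -` P"
  then show "pval (pfus B) a b \<in> pcar B \<inter> e -` P"
    using pval_closed[OF in_pops(3) d] emb_fus[OF d, symmetric] lprime_filter_fus[OF P] by auto
next
  fix a b assume d: "(a, b) \<in> pdom (pldiv B) (pcar B)"
    and "a \<in> pcar B \<inter> e -` P \<and> pval (pldiv B) a b \<in> pcar B \<inter> e -` P"
  moreover have "b \<in> pcar B" using d by (simp add: pdom_def)
  ultimately show "b \<in> pcar B \<inter> e -` P"
    using emb_ldiv[OF d] lprime_filter_ldiv_mp[OF P] emb_closed by auto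
next
  fix a b assume d: "(a, b) \<in> pdom (prdiv B) (pcar B)"
    and "pval (prdiv B) a b \<in> pcar B \<inter> e -` P \<and> b \<in> pcar B \<inter> e -` P"
  moreover have "a \<in> pcar B" using d by (simp add: pdom_def)
  ultimately show "a \<in> pcar B \<inter> e -` P"
    using emb_rdiv[OF d] lprime_filter_rdiv_mp[OF P] emb_closed by auto
qed

lemma relR_pullback:
  assumes H: "lprime_filter H" and PQ: "\<forall>p\<in>P. \<forall>q\<in>Q. fus p q \<in> H"
  shows "relR B (pullback P) (pullback Q) (pullback H)"
  unfolding relR_def pullback_def
proof (intro conjI ball_prodI impI)
  fix a b assume d: "(a, b) \<in> pdom (pfus B) (pcar B)" and "a \<in> pcar B \<inter> e -` P \<and> b \<in> pcar B \<inter> e -` Q"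
  then show "pval (pfus B) a b \<in> pcar B \<inter> e -` H"
    using pval_closed[OF in_pops(3) d] emb_fus[OF d, symmetric] PQ by auto
next
  fix a b assume d: "(a, b) \<in> pdom (pldiv B) (pcar B)"
    and ab: "a \<in> pcar B \<inter> e -` P \<and> pval (pldiv B) a b \<in> pcar B \<inter> e -` Q"
  have abB: "a \<in> pcar B" "b \<in> pcar B" using d by (simp_all add: pdom_def)
  have "fus (e a) (ldiv (e a) (e b)) \<in> H" using PQ ab emb_ldiv[OF d] by auto
  then have "e b \<in> H"
    using lprime_filter_up[OF H _ emb_closed[OF abB(2)] fus_ldiv_le[OF emb_closed[OF abB(1)] emb_closed[OF abB(2)]]] by blast
  then show "b \<in> pcar B \<inter> e -` H" using abB by simp
next
  fix b a assume d: "(b, a) \<in> pdom (prdiv B) (pcar B)"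
    and ab: "pval (prdiv B) b a \<in> pcar B \<inter> e -` P \<and> a \<in> pcar B \<inter> e -` Q"
  have abB: "b \<in> pcar B" "a \<in> pcar B" using d by (simp_all add: pdom_def)
  have "fus (rdiv (e b) (e a)) (e a) \<in> H" using PQ ab emb_rdiv[OF d] by auto
  then have "e b \<in> H"
    using lprime_filter_up[OF H _ emb_closed[OF abB(1)] fus_rdiv_le[OF emb_closed[OF abB(2)] emb_closed[OF abB(1)]]] by blast
  then show "b \<in> pcar B \<inter> e -` H" using abB by simp
qed

definition prime_pullbacks :: "'c set set" where
  "prime_pullbacks = {pullback P | P. lprime_filter P}"

lemma pullback_in_prime_pullbacks: "lprime_filter P \<Longrightarrow> pullback P \<in> prime_pullbacks"
  unfolding prime_pullbacks_def by blast

lemma prime_pullbacks_prime_closed: "\<forall>f\<in>prime_pullbacks. prime_filter B f \<and> closed_filter B f"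
  unfolding prime_pullbacks_def using prime_filter_pullback closed_filter_pullback by blast

lemma condD_prime_pullbacks: "condD B prime_pullbacks"
  unfolding condD_def
proof (intro ballI impI)
  fix a b assume a: "a \<in> pcar B" and b: "b \<in> pcar B" and nab: "\<not> ple B a b"
  have ea: "e a \<in> C" and eb: "e b \<in> C" using emb_closed a b by auto
  have "\<not> le s (e b)" if "s \<in> {y\<in>C. le (e a) y}" for s
    using that nab emb_le[OF a b] le_trans[OF ea _ eb] by blast
  moreover have "{y\<in>C. le (e a) y} \<noteq> {}" using ea le_refl by blast
  ultimately obtain P where P: "lprime_filter P" "{y\<in>C. le (e a) y} \<subseteq> P" "e b \<notin> P"
    using lprime_filter_excluding[OF lfilter_up[OF ea] _ eb] by blast
  have "a \<in> pullback P" "b \<notin> pullback P" using P(2,3) a ea le_refl by (auto simp: pullback_def)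
  then show "\<exists>f\<in>prime_pullbacks. a \<in> f \<and> b \<notin> f" using pullback_in_prime_pullbacks[OF P(1)] by blast
qed

lemma condM_fus_prime_pullbacks: "condM_fus B prime_pullbacks"
  unfolding condM_fus_def
proof (intro ball_prodI ballI impI)
  fix h a b assume h: "h \<in> prime_pullbacks" and d: "(a, b) \<in> pdom (pfus B) (pcar B)"
    and ab: "pval (pfus B) a b \<in> h"
  obtain H where H: "lprime_filter H" "h = pullback H" using h unfolding prime_pullbacks_def by blast
  have abB: "a \<in> pcar B" "b \<in> pcar B" using d by (simp_all add: pdom_def)
  have "fus (e a) (e b) \<in> H" using ab H(2) emb_fus[OF d] by (simp add: pullback_def)
  then obtain P Q where PQ: "lprime_filter P" "lprime_filter Q" "e a \<in> P" "e b \<in> Q"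
    "\<forall>p\<in>P. \<forall>q\<in>Q. fus p q \<in> H"
    using lprime_filter_fus_split[OF H(1) emb_closed[OF abB(1)] emb_closed[OF abB(2)]] by blast
  have "a \<in> pullback P" "b \<in> pullback Q" using PQ abB by (simp_all add: pullback_def)
  then show "\<exists>f\<in>prime_pullbacks. \<exists>g\<in>prime_pullbacks. a \<in> f \<and> b \<in> g \<and> relR B f g h"
    using relR_pullback[OF H(1) PQ(5)] H(2) pullback_in_prime_pullbacks PQ(1,2) by blast
qed

lemma condM_ldiv_prime_pullbacks: "condM_ldiv B prime_pullbacks"
  unfolding condM_ldiv_def
proof (intro ball_prodI ballI impI)
  fix g a b assume g: "g \<in> prime_pullbacks" and d: "(a, b) \<in> pdom (pldiv B) (pcar B)"
    and ab: "pval (pldiv B) a b \<notin> g"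
  obtain G where G: "lprime_filter G" "g = pullback G" using g unfolding prime_pullbacks_def by blast
  have abB: "a \<in> pcar B" "b \<in> pcar B" using d by (simp_all add: pdom_def)
  have "ldiv (e a) (e b) \<notin> G" using ab G(2) emb_ldiv[OF d] pval_closed[OF in_pops(4) d] by (simp add: pullback_def)
  then obtain P Q where PQ: "lprime_filter P" "lprime_filter Q" "e a \<in> P" "e b \<notin> Q"
    "\<forall>p\<in>P. \<forall>g\<in>G. fus p g \<in> Q"
    using lprime_filter_ldiv_split[OF G(1) emb_closed[OF abB(1)] emb_closed[OF abB(2)]] by blast
  have "a \<in> pullback P" "b \<notin> pullback Q" using PQ abB by (simp_all add: pullback_def)
  then show "\<exists>f\<in>prime_pullbacks. \<exists>h\<in>prime_pullbacks. a \<in> f \<and> b \<notin> h \<and> relR B f g h"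
    using relR_pullback[OF PQ(2) PQ(5)] G(2) pullback_in_prime_pullbacks PQ(1,2) by blast
qed

lemma condM_rdiv_prime_pullbacks: "condM_rdiv B prime_pullbacks"
  unfolding condM_rdiv_def
proof (intro ball_prodI ballI impI)
  fix f a b assume f: "f \<in> prime_pullbacks" and d: "(a, b) \<in> pdom (prdiv B) (pcar B)"
    and ab: "pval (prdiv B) a b \<notin> f"
  obtain P where P: "lprime_filter P" "f = pullback P" using f unfolding prime_pullbacks_def by blast
  have abB: "a \<in> pcar B" "b \<in> pcar B" using d by (simp_all add: pdom_def)
  have "rdiv (e a) (e b) \<notin> P" using ab P(2) emb_rdiv[OF d] pval_closed[OF in_pops(5) d] by (simp add: pullback_def)
  then obtain G H where GH: "lprime_filter G" "lprime_filter H" "e b \<in> G" "e a \<notin> H"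
    "\<forall>p\<in>P. \<forall>g\<in>G. fus p g \<in> H"
    using lprime_filter_rdiv_split[OF P(1) emb_closed[OF abB(1)] emb_closed[OF abB(2)]] by blast
  have "b \<in> pullback G" "a \<notin> pullback H" using GH abB by (simp_all add: pullback_def)
  then show "\<exists>g\<in>prime_pullbacks. \<exists>h\<in>prime_pullbacks. b \<in> g \<and> a \<notin> h \<and> relR B f g h"
    using relR_pullback[OF GH(2) GH(5)] P(2) pullback_in_prime_pullbacks GH(1,2) by blast
qed

theorem representable_sq_embedded: "representable_sq B"
  unfolding representable_sq_def
  using partial_bounded_lattice_embedded prime_pullbacks_prime_closed condD_prime_pullbacks
    condM_fus_prime_pullbacks condM_ldiv_prime_pullbacks condM_rdiv_prime_pullbacks
  by blast

end

lemma brdg_embedding_substructure: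
  assumes B: "partial_structure B" and A: "square_increasing_brdg A"
    and e: "partial_substructure_via B A e"
  shows "brdg_embedding (pcar A) (pval (pmeet A)) (pval (pjoin A)) (ple A) (pbot A) (ptop A)
           (pval (pfus A)) (pval (pldiv A)) (pval (prdiv A)) B e"
  by (intro brdg_embedding.intro square_increasing_lattice_on_brdg[OF A] brdg_embedding_axioms.intro)
    (use B e in \<open>auto simp: partial_substructure_via_def pdom_def intro!: pval_hom\<close>)

section \<open>The complex algebra of a family of prime filters\<close>

definition complex_fus :: "'x set \<Rightarrow> ('x \<Rightarrow> 'x \<Rightarrow> 'x \<Rightarrow> bool) \<Rightarrow> 'x set \<Rightarrow> 'x set \<Rightarrow> 'x set" where
  "complex_fus F R U V = {h\<in>F. \<exists>f\<in>U. \<exists>g\<in>V. R f g h}"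

definition complex_ldiv :: "'x set \<Rightarrow> ('x \<Rightarrow> 'x \<Rightarrow> 'x \<Rightarrow> bool) \<Rightarrow> 'x set \<Rightarrow> 'x set \<Rightarrow> 'x set" where
  "complex_ldiv F R U W = {g\<in>F. \<forall>f\<in>U. \<forall>h\<in>F. R f g h \<longrightarrow> h \<in> W}"

definition complex_rdiv :: "'x set \<Rightarrow> ('x \<Rightarrow> 'x \<Rightarrow> 'x \<Rightarrow> bool) \<Rightarrow> 'x set \<Rightarrow> 'x set \<Rightarrow> 'x set" where
  "complex_rdiv F R W V = {f\<in>F. \<forall>g\<in>V. \<forall>h\<in>F. R f g h \<longrightarrow> h \<in> W}"

text \<open>The order is restricted to the carrier Pow F, as required by partial_structure.\<close>
definition complex_algebra :: "'x set \<Rightarrow> ('x \<Rightarrow> 'x \<Rightarrow> 'x \<Rightarrow> bool) \<Rightarrow> 'x set pstruct" where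
  "complex_algebra F R = \<lparr>pcar = Pow F, pmeet = \<lambda>U V. Some (U \<inter> V), pjoin = \<lambda>U V. Some (U \<union> V),
     pfus = \<lambda>U V. Some (complex_fus F R U V), pldiv = \<lambda>U V. Some (complex_ldiv F R U V),
     prdiv = \<lambda>U V. Some (complex_rdiv F R U V), pbot = {}, ptop = F,
     ple = \<lambda>U V. U \<subseteq> V \<and> V \<subseteq> F\<rparr>"

lemma complex_fus_subset_iff_ldiv:
  "V \<subseteq> F \<Longrightarrow> complex_fus F R U V \<subseteq> W \<longleftrightarrow> V \<subseteq> complex_ldiv F R U W"
  unfolding complex_fus_def complex_ldiv_def by blast

lemma complex_fus_subset_iff_rdiv:
  "U \<subseteq> F \<Longrightarrow> complex_fus F R U V \<subseteq> W \<longleftrightarrow> U \<subseteq> complex_rdiv F R W V"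
  unfolding complex_fus_def complex_rdiv_def by blast

lemma is_brdg_complex_algebra: "is_brdg (complex_algebra F R)"
proof -
  have residuated: "(complex_fus F R U V \<subseteq> W \<and> W \<subseteq> F \<longleftrightarrow> V \<subseteq> complex_ldiv F R U W \<and> complex_ldiv F R U W \<subseteq> F)
      \<and> (complex_fus F R U V \<subseteq> W \<and> W \<subseteq> F \<longleftrightarrow> U \<subseteq> complex_rdiv F R W V \<and> complex_rdiv F R W V \<subseteq> F)"
    if "U \<subseteq> F" "V \<subseteq> F" "W \<subseteq> F" for U V W
    using that complex_fus_subset_iff_ldiv[OF that(2)] complex_fus_subset_iff_rdiv[OF that(1)]
    by (auto simp: complex_ldiv_def complex_rdiv_def)
  show ?thesis
    unfolding is_brdg_def Let_def
    by (simp add: complex_algebra_def partial_structure_def pops_def pval_def residuated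
        complex_fus_def complex_ldiv_def complex_rdiv_def Int_Un_distrib; blast)
qed

lemma square_increasing_complex_algebra:
  assumes "\<And>f. f \<in> F \<Longrightarrow> R f f f"
  shows "square_increasing_brdg (complex_algebra F R)"
  unfolding square_increasing_brdg_def
proof (intro conjI ballI)
  show "is_brdg (complex_algebra F R)" by (rule is_brdg_complex_algebra)
  fix U assume "U \<in> pcar (complex_algebra F R)"
  then show "ple (complex_algebra F R) U (pval (pfus (complex_algebra F R)) U U)"
    using assms by (simp add: complex_algebra_def pval_def complex_fus_def) blast
qed

lemma closed_filter_relR_self: "closed_filter B f \<Longrightarrow> relR B f f f"
  unfolding closed_filter_def relR_def by simp

definition stone_map :: "'a set set \<Rightarrow> 'a \<Rightarrow> 'a set set" where
  "stone_map F a = {f\<in>F. a \<in> f}"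

lemma prime_filter_up: "prime_filter S f \<Longrightarrow> a \<in> f \<Longrightarrow> b \<in> pcar S \<Longrightarrow> ple S a b \<Longrightarrow> b \<in> f"
  by (simp add: prime_filter_def)

lemma prime_filter_meet:
  "prime_filter S f \<Longrightarrow> (a, b) \<in> pdom (pmeet S) (pcar S) \<Longrightarrow> a \<in> f \<Longrightarrow> b \<in> f \<Longrightarrow> pval (pmeet S) a b \<in> f"
  unfolding prime_filter_def by fast

lemma prime_filter_join:
  "prime_filter S f \<Longrightarrow> (a, b) \<in> pdom (pjoin S) (pcar S) \<Longrightarrow> pval (pjoin S) a b \<in> f \<Longrightarrow> a \<in> f \<or> b \<in> f"
  unfolding prime_filter_def by fast

lemma relR_fusD:
  "relR S f g h \<Longrightarrow> (a, b) \<in> pdom (pfus S) (pcar S) \<Longrightarrow> a \<in> f \<Longrightarrow> b \<in> g \<Longrightarrow> pval (pfus S) a b \<in> h"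
  unfolding relR_def by fast

lemma relR_ldivD:
  "relR S f g h \<Longrightarrow> (a, b) \<in> pdom (pldiv S) (pcar S) \<Longrightarrow> a \<in> f \<Longrightarrow> pval (pldiv S) a b \<in> g \<Longrightarrow> b \<in> h"
  unfolding relR_def by fast

lemma relR_rdivD:
  "relR S f g h \<Longrightarrow> (b, a) \<in> pdom (prdiv S) (pcar S) \<Longrightarrow> pval (prdiv S) b a \<in> f \<Longrightarrow> a \<in> g \<Longrightarrow> b \<in> h"
  unfolding relR_def by fast

lemma stone_map_le_iff:
  assumes F: "\<forall>f\<in>F. prime_filter B f" and D: "condD B F" and ab: "a \<in> pcar B" "b \<in> pcar B"
  shows "ple B a b \<longleftrightarrow> stone_map F a \<subseteq> stone_map F b"
proof
  assume "ple B a b"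
  then show "stone_map F a \<subseteq> stone_map F b"
    using F prime_filter_up[OF _ _ ab(2)] unfolding stone_map_def by blast
next
  assume "stone_map F a \<subseteq> stone_map F b"
  then show "ple B a b" using D ab unfolding condD_def stone_map_def by blast
qed

lemma partial_bounded_lattice_meet_le:
  assumes "partial_bounded_lattice S" "(a, b) \<in> pdom (pmeet S) (pcar S)"
  shows "ple S (pval (pmeet S) a b) a" "ple S (pval (pmeet S) a b) b"
  using assms unfolding partial_bounded_lattice_def Let_def by fastforce+

lemma partial_bounded_lattice_antisym:
  assumes "partial_bounded_lattice S" "a \<in> pcar S" "b \<in> pcar S" "ple S a b" "ple S b a"
  shows "a = b"
proof -
  have "\<forall>x\<in>pcar S. \<forall>y\<in>pcar S. ple S x y \<and> ple S y x \<longrightarrow> x = y"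
    using assms(1) unfolding partial_bounded_lattice_def Let_def by (elim conjE) assumption
  then show ?thesis using assms(2-5) by blast
qed

lemma partial_bounded_lattice_join_ge:
  assumes "partial_bounded_lattice S" "(a, b) \<in> pdom (pjoin S) (pcar S)"
  shows "ple S a (pval (pjoin S) a b)" "ple S b (pval (pjoin S) a b)"
  using assms unfolding partial_bounded_lattice_def Let_def by fastforce+

lemma stone_map_meet:
  assumes L: "partial_bounded_lattice B" and F: "\<forall>f\<in>F. prime_filter B f"
    and d: "(a, b) \<in> pdom (pmeet B) (pcar B)"
  shows "stone_map F (pval (pmeet B) a b) = stone_map F a \<inter> stone_map F b"
proof -
  have ab: "a \<in> pcar B" "b \<in> pcar B" using d by (simp_all add: pdom_def)
  note lower = partial_bounded_lattice_meet_le[OF L d]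
  have "pval (pmeet B) a b \<in> f \<longleftrightarrow> a \<in> f \<and> b \<in> f" if f: "prime_filter B f" for f
  proof
    assume "pval (pmeet B) a b \<in> f"
    then show "a \<in> f \<and> b \<in> f" using prime_filter_up[OF f] lower ab by blast
  next
    assume "a \<in> f \<and> b \<in> f"
    then show "pval (pmeet B) a b \<in> f" using prime_filter_meet[OF f d] by blast
  qed
  then show ?thesis using F unfolding stone_map_def by blast
qed

lemma stone_map_join:
  assumes B: "partial_structure B" and L: "partial_bounded_lattice B" and F: "\<forall>f\<in>F. prime_filter B f"
    and d: "(a, b) \<in> pdom (pjoin B) (pcar B)"
  shows "stone_map F (pval (pjoin B) a b) = stone_map F a \<union> stone_map F b"
proof -
  have c: "pval (pjoin B) a b \<in> pcar B"
    using partial_structure_pval_closed[OF B in_pops(2) d] .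
  note upper = partial_bounded_lattice_join_ge[OF L d]
  have "pval (pjoin B) a b \<in> f \<longleftrightarrow> a \<in> f \<or> b \<in> f" if f: "prime_filter B f" for f
  proof
    assume "pval (pjoin B) a b \<in> f"
    then show "a \<in> f \<or> b \<in> f" using prime_filter_join[OF f d] by blast
  next
    assume "a \<in> f \<or> b \<in> f"
    then show "pval (pjoin B) a b \<in> f" using prime_filter_up[OF f _ c] upper by blast
  qed
  then show ?thesis using F unfolding stone_map_def by blast
qed

lemma stone_map_fus:
  assumes M: "condM_fus B F" and d: "(a, b) \<in> pdom (pfus B) (pcar B)"
  shows "stone_map F (pval (pfus B) a b) = complex_fus F (relR B) (stone_map F a) (stone_map F b)"
proof
  show "stone_map F (pval (pfus B) a b) \<subseteq> complex_fus F (relR B) (stone_map F a) (stone_map F b)"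
    using M d unfolding condM_fus_def stone_map_def complex_fus_def by blast
  show "complex_fus F (relR B) (stone_map F a) (stone_map F b) \<subseteq> stone_map F (pval (pfus B) a b)"
    using relR_fusD[OF _ d] unfolding stone_map_def complex_fus_def by blast
qed

lemma stone_map_ldiv:
  assumes M: "condM_ldiv B F" and d: "(a, b) \<in> pdom (pldiv B) (pcar B)"
  shows "stone_map F (pval (pldiv B) a b) = complex_ldiv F (relR B) (stone_map F a) (stone_map F b)"
proof
  show "stone_map F (pval (pldiv B) a b) \<subseteq> complex_ldiv F (relR B) (stone_map F a) (stone_map F b)"
    using relR_ldivD[OF _ d] unfolding stone_map_def complex_ldiv_def by blast
  show "complex_ldiv F (relR B) (stone_map F a) (stone_map F b) \<subseteq> stone_map F (pval (pldiv B) a b)"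
    using M d unfolding condM_ldiv_def stone_map_def complex_ldiv_def by blast
qed

lemma stone_map_rdiv:
  assumes M: "condM_rdiv B F" and d: "(a, b) \<in> pdom (prdiv B) (pcar B)"
  shows "stone_map F (pval (prdiv B) a b) = complex_rdiv F (relR B) (stone_map F a) (stone_map F b)"
proof
  show "stone_map F (pval (prdiv B) a b) \<subseteq> complex_rdiv F (relR B) (stone_map F a) (stone_map F b)"
    using relR_rdivD[OF _ d] unfolding stone_map_def complex_rdiv_def by blast
  show "complex_rdiv F (relR B) (stone_map F a) (stone_map F b) \<subseteq> stone_map F (pval (prdiv B) a b)"
    using M d unfolding condM_rdiv_def stone_map_def complex_rdiv_def by blast
qed

lemma pdom_pval_Some: "a \<in> X \<Longrightarrow> b \<in> X \<Longrightarrow> op a b = Some c \<Longrightarrow> (a, b) \<in> pdom op X \<and> pval op a b = c"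
  by (simp add: pdom_def pval_def)

lemma stone_map_substructure:
  assumes B: "partial_structure B" and L: "partial_bounded_lattice B"
    and F: "\<forall>f\<in>F. prime_filter B f" and D: "condD B F"
    and Mf: "condM_fus B F" and Ml: "condM_ldiv B F" and Mr: "condM_rdiv B F"
  shows "partial_substructure_via B (complex_algebra F (relR B)) (stone_map F)"
  unfolding partial_substructure_via_def
proof (intro conjI ballI allI impI)
  note le_iff = stone_map_le_iff[OF F D]
  show "inj_on (stone_map F) (pcar B)"
  proof (rule inj_onI)
    fix a b assume ab: "a \<in> pcar B" "b \<in> pcar B" and eq: "stone_map F a = stone_map F b"
    have "ple B a b" "ple B b a" using le_iff[OF ab] le_iff[OF ab(2,1)] eq by simp_all
    then show "a = b" by (rule partial_bounded_lattice_antisym[OF L ab])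
  qed
  show "stone_map F ` pcar B \<subseteq> pcar (complex_algebra F (relR B))"
    by (auto simp: complex_algebra_def stone_map_def)
  show "stone_map F (pbot B) = pbot (complex_algebra F (relR B))"
    using F by (auto simp: complex_algebra_def stone_map_def prime_filter_def)
  show "stone_map F (ptop B) = ptop (complex_algebra F (relR B))"
    using F by (auto simp: complex_algebra_def stone_map_def prime_filter_def)
  fix a b assume ab: "a \<in> pcar B" "b \<in> pcar B"
  show "ple B a b \<longleftrightarrow> ple (complex_algebra F (relR B)) (stone_map F a) (stone_map F b)"
    using le_iff[OF ab] by (auto simp: complex_algebra_def stone_map_def)
  fix c
  show "pmeet B a b = Some c \<Longrightarrow> pmeet (complex_algebra F (relR B)) (stone_map F a) (stone_map F b) = Some (stone_map F c)"
    using pdom_pval_Some[OF ab] stone_map_meet[OF L F] by (fastforce simp: complex_algebra_def)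
  show "pjoin B a b = Some c \<Longrightarrow> pjoin (complex_algebra F (relR B)) (stone_map F a) (stone_map F b) = Some (stone_map F c)"
    using pdom_pval_Some[OF ab] stone_map_join[OF B L F] by (fastforce simp: complex_algebra_def)
  show "pfus B a b = Some c \<Longrightarrow> pfus (complex_algebra F (relR B)) (stone_map F a) (stone_map F b) = Some (stone_map F c)"
    using pdom_pval_Some[OF ab] stone_map_fus[OF Mf] by (fastforce simp: complex_algebra_def)
  show "pldiv B a b = Some c \<Longrightarrow> pldiv (complex_algebra F (relR B)) (stone_map F a) (stone_map F b) = Some (stone_map F c)"
    using pdom_pval_Some[OF ab] stone_map_ldiv[OF Ml] by (fastforce simp: complex_algebra_def)
  show "prdiv B a b = Some c \<Longrightarrow> prdiv (complex_algebra F (relR B)) (stone_map F a) (stone_map F b) = Some (stone_map F c)"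
    using pdom_pval_Some[OF ab] stone_map_rdiv[OF Mr] by (fastforce simp: complex_algebra_def)
qed

theorem mainTheorem15:
  fixes B :: "'a pstruct"
  assumes "partial_structure B"
  shows "(\<forall>(A :: 'b pstruct) e. square_increasing_brdg A \<and> partial_substructure_via B A e
            \<longrightarrow> representable_sq B)
     \<and> (representable_sq B \<longrightarrow>
          (\<exists>(A :: 'a set set pstruct) e. square_increasing_brdg A \<and> partial_substructure_via B A e))"
proof (intro conjI allI impI)
  fix A :: "'b pstruct" and e assume "square_increasing_brdg A \<and> partial_substructure_via B A e"
  then interpret brdg_embedding "pcar A" "pval (pmeet A)" "pval (pjoin A)" "ple A" "pbot A" "ptop A"
      "pval (pfus A)" "pval (pldiv A)" "pval (prdiv A)" B e
    using brdg_embedding_substructure[OF assms] by blast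
  show "representable_sq B" by (rule representable_sq_embedded)
next
  assume "representable_sq B"
  then obtain F where L: "partial_bounded_lattice B"
    and F: "\<forall>f\<in>F. prime_filter B f \<and> closed_filter B f"
    and conds: "condD B F" "condM_fus B F" "condM_ldiv B F" "condM_rdiv B F"
    unfolding representable_sq_def by blast
  have "square_increasing_brdg (complex_algebra F (relR B))"
    using F closed_filter_relR_self by (blast intro: square_increasing_complex_algebra)
  moreover have "partial_substructure_via B (complex_algebra F (relR B)) (stone_map F)"
    using stone_map_substructure[OF assms L _ conds] F by blast
  ultimately show "\<exists>(A :: 'a set set pstruct) e. square_increasing_brdg A \<and> partial_substructure_via B A e"
    by blast
qed

end
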